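(* In Algorithm SC (with $|b(v)|\le\deg(v)$ for all $v$ and $\alpha\in(0,1/4]$), for every round $i$ and every $v\in V$: if $\tilde\phi^i_v>0$ then $r^{\le i-1}_v\ge\frac{\ln n}{\alpha}$, and if $\tilde\phi^i_v<0$ then $r^{\le i-1}_v\le-\frac{\ln n}{\alpha}$.
   Context: Let $G=(V,E)$ be a unit-capacity undirected graph, $n=|V|\ge3$, every vertex of degree $\deg(v)\ge1$, each edge with a fixed arbitrary orientation; $B\in\mathbb R^{V\times E}$ is the incidence matrix (column $(u,v)$ has $+1$ in row $u$, $-1$ in row $v$, $0$ elsewhere). Algorithm SC takes $b\in\mathbb R^V$ with $|b(v)|\le\deg(v)$ for all $v$, $\alpha\in(0,1/4]$ and an integer $T\ge1$. Set $w^1_{v,+}=w^1_{v,-}=1$ for all $v$. For $i=1,\dots,T$: (1) for $\circ\in\{+,-\}$, $\tilde w^i_{v,\circ}=w^i_{v,\circ}$ if $w^i_{v,\circ}\ge n$ and $\tilde w^i_{v,\circ}=0$ otherwise; (2) $\tilde\phi^i_v=(\tilde w^i_{v,+}-\tilde w^i_{v,-})/\deg(v)$; (3) for each edge $(u,v)$, $f^i(u,v)=+1$ if $\tilde\phi^i_u>\tilde\phi^i_v$, $-1$ if $\tilde\phi^i_u<\tilde\phi^i_v$, $0$ otherwise; (4) if $\langle\tilde\phi^i,b\rangle>\langle\tilde\phi^i,Bf^i\rangle$, terminate; (5) $r^i_v=(b(v)-(Bf^i)_v)/\deg(v)$; (6) $w^{i+1}_{v,+}=w^i_{v,+}(1+\alpha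 r^i_v)$ and $w^{i+1}_{v,-}=w^i_{v,-}(1-\alpha r^i_v)$. Write $r^{\le i}_v=\sum_{i'=1}^{i}r^{i'}_v$, with $r^{\le 0}_v=0$. *)

theory Defs
  imports Complex_Main
begin

text \<open>Graph: finite vertex set V, edge set E of oriented pairs (u,v) (column (u,v) of B has
 +1 in row u and -1 in row v). Undirected simple graph with a fixed orientation.\<close>

definition sc_deg :: "('v \<times> 'v) set \<Rightarrow> 'v \<Rightarrow> real" where
  "sc_deg E v = real (card {e \<in> E. fst e = v \<or> snd e = v})"

definition sc_Bf :: "('v \<times> 'v) set \<Rightarrow> ('v \<times> 'v \<Rightarrow> real) \<Rightarrow> 'v \<Rightarrow> real" where
  "sc_Bf E f v = (\<Sum>e\<in>{e \<in> E. fst e = v}. f e) - (\<Sum>e\<in>{e \<in> E. snd e = v}. f e)"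

definition sc_trunc :: "'v set \<Rightarrow> real \<Rightarrow> real" where
  "sc_trunc V w = (if w \<ge> real (card V) then w else 0)"

definition sc_phi_of :: "'v set \<Rightarrow> ('v \<times> 'v) set \<Rightarrow> ('v \<Rightarrow> real) \<times> ('v \<Rightarrow> real) \<Rightarrow> 'v \<Rightarrow> real" where
  "sc_phi_of V E w v = (sc_trunc V (fst w v) - sc_trunc V (snd w v)) / sc_deg E v"

definition sc_flow_of :: "('v \<Rightarrow> real) \<Rightarrow> 'v \<times> 'v \<Rightarrow> real" where
  "sc_flow_of phi e = (if phi (fst e) > phi (snd e) then 1
                       else if phi (fst e) < phi (snd e) then -1 else 0)"

definition sc_r_of :: "'v set \<Rightarrow> ('v \<times> 'v) set \<Rightarrow> ('v \<Rightarrow> real) \<Rightarrow> ('v \<Rightarrow> real) \<times> ('v \<Rightarrow> real) \<Rightarrow> 'v \<Rightarrow> real" where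
  "sc_r_of V E b w v = (b v - sc_Bf E (sc_flow_of (sc_phi_of V E w)) v) / sc_deg E v"

text \<open>Weights: sc_W V E b alpha k is the pair (w^{k+1}_+, w^{k+1}_-) (shifted index, k = i - 1).
 Step (6) is the update.\<close>
primrec sc_W :: "'v set \<Rightarrow> ('v \<times> 'v) set \<Rightarrow> ('v \<Rightarrow> real) \<Rightarrow> real \<Rightarrow> nat \<Rightarrow> ('v \<Rightarrow> real) \<times> ('v \<Rightarrow> real)" where
  "sc_W V E b alpha 0 = ((\<lambda>v. 1), (\<lambda>v. 1))"
| "sc_W V E b alpha (Suc k) =
     (let w = sc_W V E b alpha k; r = sc_r_of V E b w in
       ((\<lambda>v. fst w v * (1 + alpha * r v)), (\<lambda>v. snd w v * (1 - alpha * r v))))"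

definition sc_phi :: "'v set \<Rightarrow> ('v \<times> 'v) set \<Rightarrow> ('v \<Rightarrow> real) \<Rightarrow> real \<Rightarrow> nat \<Rightarrow> 'v \<Rightarrow> real" where
  "sc_phi V E b alpha i = sc_phi_of V E (sc_W V E b alpha (i - 1))"

definition sc_f :: "'v set \<Rightarrow> ('v \<times> 'v) set \<Rightarrow> ('v \<Rightarrow> real) \<Rightarrow> real \<Rightarrow> nat \<Rightarrow> 'v \<times> 'v \<Rightarrow> real" where
  "sc_f V E b alpha i = sc_flow_of (sc_phi V E b alpha i)"

definition sc_r :: "'v set \<Rightarrow> ('v \<times> 'v) set \<Rightarrow> ('v \<Rightarrow> real) \<Rightarrow> real \<Rightarrow> nat \<Rightarrow> 'v \<Rightarrow> real" where
  "sc_r V E b alpha i = sc_r_of V E b (sc_W V E b alpha (i - 1))"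

definition sc_rcum :: "'v set \<Rightarrow> ('v \<times> 'v) set \<Rightarrow> ('v \<Rightarrow> real) \<Rightarrow> real \<Rightarrow> nat \<Rightarrow> 'v \<Rightarrow> real" where
  "sc_rcum V E b alpha i v = (\<Sum>i'\<in>{1..i}. sc_r V E b alpha i' v)"

definition sc_terminates :: "'v set \<Rightarrow> ('v \<times> 'v) set \<Rightarrow> ('v \<Rightarrow> real) \<Rightarrow> real \<Rightarrow> nat \<Rightarrow> bool" where
  "sc_terminates V E b alpha i \<longleftrightarrow>
     (\<Sum>v\<in>V. sc_phi V E b alpha i v * b v) >
     (\<Sum>v\<in>V. sc_phi V E b alpha i v * sc_Bf E (sc_f V E b alpha i) v)"

end

theory Submission
  imports Defs
begin

text \<open>Unrolling the multiplicative update gives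
  w^i_{v,+} = \<Prod>_{i'<i} (1 + \<alpha> r^{i'}_v) and w^i_{v,-} = \<Prod>_{i'<i} (1 - \<alpha> r^{i'}_v).
  Since |b(v)| and |(B f)_v| are at most deg(v), every residual satisfies |r| \<le> 2, so
  |\<alpha> r| \<le> 1/2 and ln(1 + x) \<le> x bounds ln w^i_{v,\<plusminus>} by \<plusminus>\<alpha> r^{\<le> i-1}_v.
  A nonzero truncated potential of sign \<plusminus> forces w^i_{v,\<plusminus>} \<ge> n, whence
  \<plusminus>\<alpha> r^{\<le> i-1}_v \<ge> ln n.\<close>

lemma abs_sum_le_card:
  fixes f :: "'a \<Rightarrow> real"
  assumes "\<And>x. x \<in> A \<Longrightarrow> \<bar>f x\<bar> \<le> 1"
  shows "\<bar>sum f A\<bar> \<le> real (card A)"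
proof -
  have "\<bar>sum f A\<bar> \<le> (\<Sum>x\<in>A. \<bar>f x\<bar>)" by (rule sum_abs)
  also have "\<dots> \<le> (\<Sum>x\<in>A. 1)" by (rule sum_mono) (rule assms)
  finally show ?thesis by simp
qed

lemma ln_prod_one_plus_le_sum:
  fixes x :: "'a \<Rightarrow> real"
  assumes "finite A" and "\<And>j. j \<in> A \<Longrightarrow> 0 < 1 + x j"
  shows "ln (\<Prod>j\<in>A. 1 + x j) \<le> (\<Sum>j\<in>A. x j)"
proof -
  have "ln (\<Prod>j\<in>A. 1 + x j) = (\<Sum>j\<in>A. ln (1 + x j))"
    using assms by (intro ln_prod) force+
  also have "\<dots> \<le> (\<Sum>j\<in>A. x j)"
    using assms(2) ln_le_minus_one by (intro sum_mono) force
  finally show ?thesis .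
qed

lemma sc_deg_eq_card_out_plus_card_in:
  assumes "finite E" and "\<And>u w. (u, w) \<in> E \<Longrightarrow> u \<noteq> w"
  shows "sc_deg E v = real (card {e \<in> E. fst e = v}) + real (card {e \<in> E. snd e = v})"
proof -
  have "{e \<in> E. fst e = v \<or> snd e = v} = {e \<in> E. fst e = v} \<union> {e \<in> E. snd e = v}" by auto
  moreover have "{e \<in> E. fst e = v} \<inter> {e \<in> E. snd e = v} = {}" using assms(2) by fastforce
  ultimately show ?thesis
    unfolding sc_deg_def using assms(1) by (simp add: card_Un_disjoint)
qed

lemma abs_sc_Bf_le_sc_deg:
  assumes "finite E" and "\<And>u w. (u, w) \<in> E \<Longrightarrow> u \<noteq> w" and "\<And>e. \<bar>f e\<bar> \<le> 1"
  shows "\<bar>sc_Bf E f v\<bar> \<le> sc_deg E v"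
proof -
  have "\<bar>\<Sum>e\<in>{e \<in> E. fst e = v}. f e\<bar> \<le> real (card {e \<in> E. fst e = v})"
    and "\<bar>\<Sum>e\<in>{e \<in> E. snd e = v}. f e\<bar> \<le> real (card {e \<in> E. snd e = v})"
    using assms(3) by (blast intro: abs_sum_le_card)+
  then show ?thesis
    using sc_deg_eq_card_out_plus_card_in[OF assms(1,2), of v] unfolding sc_Bf_def by linarith
qed

lemma abs_sc_r_of_le_2:
  assumes "finite E" and "\<And>u w. (u, w) \<in> E \<Longrightarrow> u \<noteq> w"
    and "sc_deg E v \<ge> 1" and "\<bar>b v\<bar> \<le> sc_deg E v"
  shows "\<bar>sc_r_of V E b w v\<bar> \<le> 2"
proof -
  have "\<bar>sc_Bf E (sc_flow_of (sc_phi_of V E w)) v\<bar> \<le> sc_deg E v"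
    using assms(1,2) by (rule abs_sc_Bf_le_sc_deg) (auto simp: sc_flow_of_def)
  then have "\<bar>b v - sc_Bf E (sc_flow_of (sc_phi_of V E w)) v\<bar> \<le> 2 * sc_deg E v"
    using assms(4) by linarith
  then show ?thesis
    unfolding sc_r_of_def using assms(3) by (simp add: abs_divide divide_le_eq)
qed

lemma sc_W_eq_prod:
  "fst (sc_W V E b alpha k) v = (\<Prod>j<k. 1 + alpha * sc_r_of V E b (sc_W V E b alpha j) v)"
  "snd (sc_W V E b alpha k) v = (\<Prod>j<k. 1 - alpha * sc_r_of V E b (sc_W V E b alpha j) v)"
  by (induction k) (simp_all add: Let_def mult.commute)

lemma sc_rcum_eq_sum:
  "sc_rcum V E b alpha k v = (\<Sum>j<k. sc_r_of V E b (sc_W V E b alpha j) v)"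
  unfolding sc_rcum_def sc_r_def by (induction k) auto

lemma ln_sc_W_le_sc_rcum:
  assumes "\<And>j. \<bar>alpha * sc_r_of V E b (sc_W V E b alpha j) v\<bar> < 1"
  shows "ln (fst (sc_W V E b alpha k) v) \<le> alpha * sc_rcum V E b alpha k v"
    and "ln (snd (sc_W V E b alpha k) v) \<le> - (alpha * sc_rcum V E b alpha k v)"
proof -
  let ?x = "\<lambda>j. alpha * sc_r_of V E b (sc_W V E b alpha j) v"
  have pos: "0 < 1 + ?x j" "0 < 1 + - ?x j" for j using assms[of j] by auto
  have "ln (\<Prod>j<k. 1 + ?x j) \<le> (\<Sum>j<k. ?x j)"
    using pos by (intro ln_prod_one_plus_le_sum) auto
  then show "ln (fst (sc_W V E b alpha k) v) \<le> alpha * sc_rcum V E b alpha k v"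
    by (simp add: sc_W_eq_prod sc_rcum_eq_sum sum_distrib_left)
  have "ln (\<Prod>j<k. 1 + - ?x j) \<le> (\<Sum>j<k. - ?x j)"
    using pos by (intro ln_prod_one_plus_le_sum) auto
  then show "ln (snd (sc_W V E b alpha k) v) \<le> - (alpha * sc_rcum V E b alpha k v)"
    by (simp add: sc_W_eq_prod sc_rcum_eq_sum sum_distrib_left sum_negf)
qed

lemma sc_phi_of_pos_imp_fst_ge:
  assumes "sc_phi_of V E w v > 0" and "sc_deg E v > 0"
  shows "fst w v \<ge> real (card V)"
  using assms unfolding sc_phi_of_def sc_trunc_def
  by (auto simp: zero_less_divide_iff split: if_splits)

lemma sc_phi_of_neg_imp_snd_ge:
  assumes "sc_phi_of V E w v < 0" and "sc_deg E v > 0"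
  shows "snd w v \<ge> real (card V)"
  using assms unfolding sc_phi_of_def sc_trunc_def
  by (auto simp: divide_less_0_iff split: if_splits)

theorem lemma2p7:
  fixes V :: "'v set" and E :: "('v \<times> 'v) set" and b :: "'v \<Rightarrow> real"
    and alpha :: real and T i :: nat and v :: 'v
  assumes finV: "finite V"
    and n3: "card V \<ge> 3"
    and E_sub: "E \<subseteq> V \<times> V"
    and no_loops: "\<And>u w. (u, w) \<in> E \<Longrightarrow> u \<noteq> w"
    and one_orient: "\<And>u w. (u, w) \<in> E \<Longrightarrow> (w, u) \<notin> E"
    and deg_pos: "\<And>x. x \<in> V \<Longrightarrow> sc_deg E x \<ge> 1"
    and b_bound: "\<And>x. x \<in> V \<Longrightarrow> \<bar>b x\<bar> \<le> sc_deg E x"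
    and alpha_pos: "0 < alpha" and alpha_le: "alpha \<le> 1/4"
    and T_pos: "T \<ge> 1"
    and i_range: "1 \<le> i" "i \<le> T"
    and not_term: "\<And>i'. 1 \<le> i' \<Longrightarrow> i' < i \<Longrightarrow> \<not> sc_terminates V E b alpha i'"
    and v_in: "v \<in> V"
  shows "(sc_phi V E b alpha i v > 0 \<longrightarrow> sc_rcum V E b alpha (i - 1) v \<ge> ln (real (card V)) / alpha)
       \<and> (sc_phi V E b alpha i v < 0 \<longrightarrow> sc_rcum V E b alpha (i - 1) v \<le> - (ln (real (card V)) / alpha))"
proof -
  let ?w = "sc_W V E b alpha (i - 1)" and ?R = "sc_rcum V E b alpha (i - 1) v"
  have finE: "finite E" using finV E_sub by (auto intro: finite_subset)
  have "\<bar>alpha * sc_r_of V E b w v\<bar> < 1" for w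
  proof -
    have "\<bar>sc_r_of V E b w v\<bar> \<le> 2"
      using finE no_loops deg_pos[OF v_in] b_bound[OF v_in] by (rule abs_sc_r_of_le_2)
    then have "alpha * \<bar>sc_r_of V E b w v\<bar> \<le> 1/4 * 2"
      using alpha_pos alpha_le by (intro mult_mono) auto
    then show ?thesis using alpha_pos by (simp add: abs_mult)
  qed
  note ln_bounds = ln_sc_W_le_sc_rcum[OF this, of "i - 1"]
  have deg: "sc_deg E v > 0" and n_pos: "real (card V) > 0" using deg_pos[OF v_in] n3 by auto
  show ?thesis
  proof (intro conjI impI)
    assume "sc_phi V E b alpha i v > 0"
    then have "fst ?w v \<ge> real (card V)"
      using deg unfolding sc_phi_def by (rule sc_phi_of_pos_imp_fst_ge)
    then have "ln (real (card V)) \<le> ln (fst ?w v)" using n_pos by simp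
    then have "ln (real (card V)) \<le> alpha * ?R" using ln_bounds(1) by linarith
    then show "ln (real (card V)) / alpha \<le> ?R" using alpha_pos by (simp add: divide_le_eq mult.commute)
  next
    assume "sc_phi V E b alpha i v < 0"
    then have "snd ?w v \<ge> real (card V)"
      using deg unfolding sc_phi_def by (rule sc_phi_of_neg_imp_snd_ge)
    then have "ln (real (card V)) \<le> ln (snd ?w v)" using n_pos by simp
    then have "ln (real (card V)) \<le> - (alpha * ?R)" using ln_bounds(2) by linarith
    then have "ln (real (card V)) / alpha \<le> - ?R" using alpha_pos by (simp add: divide_le_eq mult.commute)
    then show "?R \<le> - (ln (real (card V)) / alpha)" by linarith
  qed
qed

end
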